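(* Let $\gamma>0$, $k>1$ an integer, $1\le c_0\le 2$, and $$\eta_{k,\gamma,c_0}=\min\left\{u\in(0,1):\ c_0\left(1-\left(\frac{u}{2k}\right)^{1/k}\right)^\gamma+\left(1-\frac{u}{2k}\right)^\gamma\le 1\right\}.$$ Then $$\eta_{k,\gamma,c_0}\le\min\left\{u\in(0,1):\ \log c_0+\gamma\log\log\frac{2k}{u}-\gamma\log k+\log\left(1+\frac{2k}{u\gamma}\right)\le 0\right\}.$$
   Context: In the paper $\gamma=(1-\alpha)/\alpha$ for a stability index $0<\alpha<1$. *)

theory Defs
  imports Complex_Main
begin

definition eta_set :: "nat \<Rightarrow> real \<Rightarrow> real \<Rightarrow> real set" where
  "eta_set k \<gamma> c0 = {u. 0 < u \<and> u < 1 \<and>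
     c0 * (1 - (u / (2 * real k)) powr (1 / real k)) powr \<gamma>
       + (1 - u / (2 * real k)) powr \<gamma> \<le> 1}"

definition bound_set :: "nat \<Rightarrow> real \<Rightarrow> real \<Rightarrow> real set" where
  "bound_set k \<gamma> c0 = {u. 0 < u \<and> u < 1 \<and>
     ln c0 + \<gamma> * ln (ln (2 * real k / u)) - \<gamma> * ln (real k)
       + ln (1 + 2 * real k / (u * \<gamma>)) \<le> 0}"

end

theory Submission
  imports Defs "HOL-Analysis.Analysis"
begin

text \<open>Put x = u/(2k) and L = ln(1/x). Since 1 - x^(1/k) \<le> L/k and (1-x)^\<gamma> \<le> exp(-\<gamma>x) \<le> 1/(1+\<gamma>x),
  the left-hand side defining \<eta> is at most c0 (L/k)^\<gamma> + 1/(1+\<gamma>x). The logarithmic condition says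
  exactly c0 (L/k)^\<gamma> (1 + 1/(\<gamma>x)) \<le> 1, i.e. c0 (L/k)^\<gamma> \<le> \<gamma>x/(1+\<gamma>x), so the sum is at most 1.
  Thus the second set is contained in the first, and the first set has a least element below m
  because its defining function is continuous and equals c0 + 1 > 1 at u = 0.\<close>

lemma one_minus_powr_inverse_le_ln:
  fixes x k :: real
  assumes "0 < x" "0 < k"
  shows "1 - x powr (1 / k) \<le> ln (1 / x) / k"
proof -
  have "x powr (1 / k) = exp (ln x / k)" using assms by (simp add: powr_def)
  moreover have "1 + ln x / k \<le> exp (ln x / k)" by (rule exp_ge_add_one_self)
  moreover have "ln (1 / x) / k = - (ln x / k)" using assms by (simp add: ln_div)
  ultimately show ?thesis by linarith
qed

lemma one_minus_powr_le_inverse: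
  fixes x g :: real
  assumes "0 \<le> x" "x < 1" "0 \<le> g"
  shows "(1 - x) powr g \<le> 1 / (1 + g * x)"
proof -
  have "g * ln (1 - x) \<le> g * (- x)"
    using ln_le_minus_one[of "1 - x"] assms by (intro mult_left_mono) auto
  hence "(1 - x) powr g \<le> exp (- (g * x))" using assms by (simp add: powr_def)
  also have "\<dots> = 1 / exp (g * x)" by (simp add: exp_minus field_simps)
  also have "\<dots> \<le> 1 / (1 + g * x)"
  proof (rule divide_left_mono)
    have "0 < 1 + g * x" using assms by (simp add: add_pos_nonneg)
    then show "0 < exp (g * x) * (1 + g * x)" by simp
  qed (use exp_ge_add_one_self[of "g * x"] in auto)
  finally show ?thesis .
qed

lemma ln_condition_imp_power_bound:
  fixes x k \<gamma> c0 :: real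
  assumes "0 < x" "x < 1" "0 < k" "0 < \<gamma>" "0 < c0"
    and "ln c0 + \<gamma> * ln (ln (1 / x)) - \<gamma> * ln k + ln (1 + 1 / (\<gamma> * x)) \<le> 0"
  shows "c0 * (ln (1 / x) / k) powr \<gamma> \<le> \<gamma> * x / (1 + \<gamma> * x)"
proof -
  define L where "L = ln (1 / x)"
  have L: "0 < L" using assms by (simp add: L_def)
  have \<gamma>x: "0 < \<gamma> * x" "0 < 1 + 1 / (\<gamma> * x)" using assms by (simp_all add: add_pos_pos)
  have "ln (c0 * (L / k) powr \<gamma> * (1 + 1 / (\<gamma> * x)))
          = ln c0 + \<gamma> * ln L - \<gamma> * ln k + ln (1 + 1 / (\<gamma> * x))"
    using L \<gamma>x assms by (simp add: ln_mult ln_div ln_powr right_diff_distrib)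
  also have "\<dots> \<le> 0" using assms by (simp add: L_def)
  finally have "c0 * (L / k) powr \<gamma> * (1 + 1 / (\<gamma> * x)) \<le> 1"
    using L \<gamma>x assms by (subst (asm) ln_le_zero_iff) (auto intro!: mult_pos_pos)
  also have "c0 * (L / k) powr \<gamma> * (1 + 1 / (\<gamma> * x))
               = c0 * (L / k) powr \<gamma> * (1 + \<gamma> * x) / (\<gamma> * x)"
    using assms by (simp add: field_simps)
  finally show ?thesis
    using \<gamma>x by (simp add: L_def pos_divide_le_eq pos_le_divide_eq add_pos_pos)
qed

lemma bound_set_subset_eta_set:
  fixes k :: nat and \<gamma> c0 :: real
  assumes "0 < \<gamma>" "1 \<le> k" "0 < c0"
  shows "bound_set k \<gamma> c0 \<subseteq> eta_set k \<gamma> c0"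
proof
  fix u assume "u \<in> bound_set k \<gamma> c0"
  then have u: "0 < u" "u < 1"
    and cond: "ln c0 + \<gamma> * ln (ln (1 / (u / (2 * real k)))) - \<gamma> * ln k
                  + ln (1 + 1 / (\<gamma> * (u / (2 * real k)))) \<le> 0"
    by (auto simp: bound_set_def mult.commute)
  define x where "x = u / (2 * real k)"
  have k: "1 \<le> real k" using assms by simp
  have x: "0 < x" "x < 1" using u k by (auto simp: x_def field_simps)
  have "(1 - x powr (1 / k)) powr \<gamma> \<le> (ln (1 / x) / k) powr \<gamma>"
  proof (rule powr_mono2)
    show "0 \<le> 1 - x powr (1 / k)" using x k by (simp add: powr_le1)
    show "1 - x powr (1 / k) \<le> ln (1 / x) / k"
      using one_minus_powr_inverse_le_ln x k by simp
  qed (use assms in auto)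
  then have "c0 * (1 - x powr (1 / k)) powr \<gamma> \<le> c0 * (ln (1 / x) / k) powr \<gamma>"
    using assms by simp
  also have "\<dots> \<le> \<gamma> * x / (1 + \<gamma> * x)"
    by (rule ln_condition_imp_power_bound[OF x _ assms(1,3) cond[folded x_def]]) (use k in simp)
  moreover have "(1 - x) powr \<gamma> \<le> 1 - \<gamma> * x / (1 + \<gamma> * x)"
  proof -
    have "0 < 1 + \<gamma> * x" using x assms by (simp add: add_pos_pos)
    then have "1 / (1 + \<gamma> * x) = 1 - \<gamma> * x / (1 + \<gamma> * x)"
      by (simp add: field_simps)
    then show ?thesis using one_minus_powr_le_inverse[of x \<gamma>] x assms by simp
  qed
  ultimately show "u \<in> eta_set k \<gamma> c0"
    using u by (simp add: eta_set_def x_def)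
qed

definition eta_lhs :: "nat \<Rightarrow> real \<Rightarrow> real \<Rightarrow> real \<Rightarrow> real" where
  "eta_lhs k \<gamma> c0 u = c0 * (1 - (u / (2 * real k)) powr (1 / real k)) powr \<gamma>
     + (1 - u / (2 * real k)) powr \<gamma>"

lemma eta_set_eq: "eta_set k \<gamma> c0 = {u. 0 < u \<and> u < 1 \<and> eta_lhs k \<gamma> c0 u \<le> 1}"
  by (simp add: eta_set_def eta_lhs_def)

lemma eta_lhs_0: "0 < k \<Longrightarrow> eta_lhs k \<gamma> c0 0 = c0 + 1"
  by (simp add: eta_lhs_def)

lemma continuous_on_eta_lhs:
  assumes "0 < k" "0 < \<gamma>"
  shows "continuous_on {0..2 * real k} (eta_lhs k \<gamma> c0)"
proof -
  have x: "0 \<le> u / (2 * real k)" "u / (2 * real k) \<le> 1" if "u \<in> {0..2 * real k}" for u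
    using that assms by auto
  have root: "continuous_on {0..2 * real k} (\<lambda>u. (u / (2 * real k)) powr (1 / real k))"
    by (rule continuous_on_powr') (use x assms in \<open>auto intro!: continuous_intros\<close>)
  have "continuous_on {0..2 * real k} (\<lambda>u. (1 - (u / (2 * real k)) powr (1 / real k)) powr \<gamma>)"
    by (rule continuous_on_powr')
       (use root x assms in \<open>auto intro!: continuous_intros powr_le1\<close>)
  moreover have "continuous_on {0..2 * real k} (\<lambda>u. (1 - u / (2 * real k)) powr \<gamma>)"
    by (rule continuous_on_powr') (use x assms in \<open>auto intro!: continuous_intros\<close>)
  ultimately show ?thesis unfolding eta_lhs_def
    by (intro continuous_on_add continuous_on_mult continuous_on_const)
qed

lemma continuous_sublevel_set_has_least:
  fixes f :: "real \<Rightarrow> real"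
  assumes "continuous_on {a..b} f" "a \<le> b" "f b \<le> c"
  obtains x where "x \<in> {a..b}" "f x \<le> c" "\<And>y. y \<in> {a..b} \<Longrightarrow> f y \<le> c \<Longrightarrow> x \<le> y"
proof -
  define S where "S = {a..b} \<inter> f -` {..c}"
  have "closed S" unfolding S_def by (rule continuous_closed_preimage[OF assms(1)]) auto
  moreover have "b \<in> S" "bdd_below S" using assms by (auto simp: S_def)
  ultimately have "Inf S \<in> S" using closed_contains_Inf by blast
  with \<open>bdd_below S\<close> show ?thesis by (intro that) (auto simp: S_def intro: cInf_lower)
qed

theorem lemma5:
  fixes k :: nat and \<gamma> c0 m :: real
  assumes "\<gamma> > 0" and "k > 1" and "1 \<le> c0" and "c0 \<le> 2"
    and "m \<in> bound_set k \<gamma> c0" and "\<forall>u\<in>bound_set k \<gamma> c0. m \<le> u"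
  shows "\<exists>\<eta>. \<eta> \<in> eta_set k \<gamma> c0 \<and> (\<forall>u\<in>eta_set k \<gamma> c0. \<eta> \<le> u) \<and> \<eta> \<le> m"
proof -
  have "m \<in> eta_set k \<gamma> c0" using bound_set_subset_eta_set[of \<gamma> k c0] assms by auto
  then have m: "0 < m" "m < 1" "eta_lhs k \<gamma> c0 m \<le> 1" by (auto simp: eta_set_eq)
  have "continuous_on {0..m} (eta_lhs k \<gamma> c0)"
    by (rule continuous_on_subset[OF continuous_on_eta_lhs]) (use assms m in auto)
  then obtain \<eta> where \<eta>: "\<eta> \<in> {0..m}" "eta_lhs k \<gamma> c0 \<eta> \<le> 1"
    and least: "\<And>u. u \<in> {0..m} \<Longrightarrow> eta_lhs k \<gamma> c0 u \<le> 1 \<Longrightarrow> \<eta> \<le> u"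
    using continuous_sublevel_set_has_least m by (metis less_imp_le)
  have "\<eta> \<noteq> 0" using \<eta> eta_lhs_0 assms by force
  with \<eta> m have "\<eta> \<in> eta_set k \<gamma> c0" by (auto simp: eta_set_eq)
  moreover have "\<eta> \<le> u" if "u \<in> eta_set k \<gamma> c0" for u
    using that least \<eta> by (cases "u \<le> m") (auto simp: eta_set_eq)
  ultimately show ?thesis using \<eta> by auto
qed

end
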